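(* Let $\alpha:R\to R'$ be a Jordan homomorphism of rings and let $T=(t_1,\ldots,t_n)\in R^n$, $n\geq 0$; write $T^\alpha=(t_1^\alpha,\ldots,t_n^\alpha)$. Then: (a) if $e^{(n)}(T)\in R^*$ then $e^{(n)}(T^\alpha)\in R'^*$; (b) if $e^{(n)}(T)\in R^*$ and $e^{(n-1)}(T)=0$ then $e^{(n-1)}(T^\alpha)=0'$.
   Context: Rings are associative with $1$; $R^*$ denotes the group of units. A Jordan homomorphism $\alpha:R\to R'$ is a map with $(a+b)^\alpha=a^\alpha+b^\alpha$, $1^\alpha=1'$, $(aba)^\alpha=a^\alpha b^\alpha a^\alpha$ for all $a,b\in R$. Let $\mathbb{Z}\langle X\rangle$ be the free $\mathbb{Z}$-algebra on non-commuting indeterminates $x_1,x_2,\ldots$; define $e^{(-2)}:=-1$, $e^{(-1)}:=0$, $e^{(0)}:=1$, $e^{(n)}:=e^{(n-1)}x_n-e^{(n-2)}$ for $n\geq1$. For a finite sequence $S=(s_1,\ldots,s_m)$ in a ring, $e^{(k)}(S)$ is the image of $e^{(k)}$ under $x_i\mapsto s_i$ ($i\leq m$), $x_i\mapsto 0$ ($i>m$); in particular $e^{(n-1)}(T)=e^{(n-1)}(t_1,\ldots,t_{n-1})$. *)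

theory Defs
  imports Main
begin

definition jordan_hom :: "('a::ring_1 \<Rightarrow> 'b::ring_1) \<Rightarrow> bool" where
  "jordan_hom f \<longleftrightarrow> (\<forall>a b. f (a + b) = f a + f b) \<and> f 1 = 1 \<and>
     (\<forall>a b. f (a * b * a) = f a * f b * f a)"

definition ring_unit :: "'a::ring_1 \<Rightarrow> bool" where
  "ring_unit x \<longleftrightarrow> (\<exists>y. x * y = 1 \<and> y * x = 1)"

text \<open>e_shift s (k+2) is e^(k) evaluated at x_i := s i (k \<ge> -2).\<close>
fun e_shift :: "(nat \<Rightarrow> 'a::ring_1) \<Rightarrow> nat \<Rightarrow> 'a" where
  "e_shift s 0 = -1"
| "e_shift s (Suc 0) = 0"
| "e_shift s (Suc (Suc n)) = e_shift s (Suc n) * s n - e_shift s n"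

definition e_seq :: "int \<Rightarrow> 'a::ring_1 list \<Rightarrow> 'a" where
  "e_seq k S = e_shift (\<lambda>i. if 1 \<le> i \<and> i \<le> length S then S ! (i - 1) else 0) (nat (k + 2))"

end

theory Submission
  imports Defs
begin

text \<open>Let \<open>e = e^(n)(T)\<close> and let \<open>f\<close> be its mirror, built by the same recursion with the new
  variable multiplied from the left. The entries of a product of the matrices \<open>[[t, 1], [-1, 0]]\<close>
  are such continuants and the entries of its inverse are their mirrors; for mutually inverse 2\<times>2
  matrices a corner of one is right (left) invertible iff the opposite corner of the other is, so
  \<open>e\<close> is a unit iff \<open>f\<close> is.

  The sandwiches \<open>e c f\<close> satisfy recurrences involving only the Jordan operations \<open>x c x\<close> and
  \<open>x t c + c t x\<close>, hence \<open>\<alpha>(e c f) = e' \<alpha>(c) f'\<close> for the continuants \<open>e', f'\<close> of \<open>T\<^sup>\<alpha>\<close>. With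
  \<open>c = e\<^sup>-\<^sup>1 f\<^sup>-\<^sup>1\<close> this gives \<open>e' \<alpha>(c) f' = 1\<close>, so \<open>e'\<close> is right and \<open>f'\<close> left invertible, and by the
  matrix argument both are units. For (b), \<open>e^(n-1)(T) = 0\<close> makes \<open>e^(n-2)(T) = -e\<close> a unit, and
  \<open>\<alpha>\<close> also preserves the product \<open>e^(n-1) f^(n-2)\<close>, which vanishes; cancelling the unit
  \<open>f^(n-2)(T\<^sup>\<alpha>)\<close> gives \<open>e^(n-1)(T\<^sup>\<alpha>) = 0\<close>.\<close>

lemma ring_unit_iff_left_right_invertible:
  "ring_unit (x::'a::ring_1) \<longleftrightarrow> (\<exists>y. x * y = 1) \<and> (\<exists>z. z * x = 1)"
proof
  assume "(\<exists>y. x * y = 1) \<and> (\<exists>z. z * x = 1)"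
  then obtain y z where y: "x * y = 1" and z: "z * x = 1" by blast
  have "z = y" using y z by (metis mult.assoc mult_1_left mult_1_right)
  with y z show "ring_unit x" unfolding ring_unit_def by blast
qed (auto simp: ring_unit_def)

lemma right_invertible_uminus_iff: "(\<exists>y. - x * y = 1) \<longleftrightarrow> (\<exists>y. (x::'a::ring_1) * y = 1)"
proof -
  have "- x * y = x * - y" for y by simp
  then show ?thesis by (metis minus_minus)
qed

lemma left_invertible_uminus_iff: "(\<exists>y. y * - x = 1) \<longleftrightarrow> (\<exists>y. y * (x::'a::ring_1) = 1)"
proof -
  have "y * - x = - y * x" for y by simp
  then show ?thesis by (metis minus_minus)
qed

datatype 'a mat2 = Mat2 'a 'a 'a 'a

instantiation mat2 :: (ring_1) monoid_mult
begin

fun times_mat2 :: "'a mat2 \<Rightarrow> 'a mat2 \<Rightarrow> 'a mat2" where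
  "Mat2 a b c d * Mat2 a' b' c' d' = Mat2 (a*a' + b*c') (a*b' + b*d') (c*a' + d*c') (c*b' + d*d')"

definition one_mat2 :: "'a mat2" where
  "1 = Mat2 1 0 0 1"

instance
proof
  fix A B C :: "'a mat2"
  show "A * B * C = A * (B * C)"
    by (cases A; cases B; cases C) (simp add: algebra_simps)
  show "1 * A = A" "A * 1 = A"
    by (cases A; simp add: one_mat2_def)+
qed

end

lemma mat2_inverse_eqs:
  assumes "Mat2 a b c d * Mat2 a' b' c' d' = 1" "Mat2 a' b' c' d' * Mat2 a b c d = 1"
  shows "a*a' + b*c' = 1" "a*b' + b*d' = 0" "c*a' + d*c' = 0" "c*b' + d*d' = 1"
    "a'*a + b'*c = 1" "a'*b + b'*d = 0" "c'*a + d'*c = 0" "c'*b + d'*d = 1"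
  using assms by (simp_all add: one_mat2_def)

lemma mat2_inverse_swap:
  assumes "Mat2 a b c d * Mat2 a' b' c' d' = 1" "Mat2 a' b' c' d' * Mat2 a b c d = 1"
  shows "Mat2 d' c' b' a' * Mat2 d c b a = 1" "Mat2 d c b a * Mat2 d' c' b' a' = 1"
  using mat2_inverse_eqs[OF assms] by (simp_all add: one_mat2_def add.commute)

lemma mat2_inverse_corner_right_invertible:
  assumes "Mat2 a b c d * Mat2 a' b' c' d' = 1" "Mat2 a' b' c' d' * Mat2 a b c d = 1"
    and "a * y = 1"
  shows "d' * (d - c * y * b) = 1"
proof -
  note eqs = mat2_inverse_eqs[OF assms(1,2)]
  have dc: "d' * c = - (c' * a)"
    using eqs(7) by (simp add: eq_neg_iff_add_eq_0 add.commute)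
  have "d' * (d - c * y * b) = d' * d - d' * c * y * b"
    by (simp add: algebra_simps)
  also have "\<dots> = d' * d + c' * (a * y) * b"
    by (simp add: dc mult.assoc)
  finally show ?thesis using eqs(8) \<open>a * y = 1\<close> by (simp add: add.commute)
qed

lemma mat2_inverse_corner_left_invertible:
  assumes "Mat2 a b c d * Mat2 a' b' c' d' = 1" "Mat2 a' b' c' d' * Mat2 a b c d = 1"
    and "y * a = 1"
  shows "(d - c * y * b) * d' = 1"
proof -
  note eqs = mat2_inverse_eqs[OF assms(1,2)]
  have bd: "b * d' = - (a * b')"
    using eqs(2) by (simp add: eq_neg_iff_add_eq_0 add.commute)
  have "(d - c * y * b) * d' = d * d' - c * y * (b * d')"
    by (simp add: algebra_simps)
  also have "\<dots> = d * d' + c * (y * a) * b'"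
    by (simp add: bd mult.assoc)
  finally show ?thesis using eqs(4) \<open>y * a = 1\<close> by (simp add: add.commute)
qed

lemma mat2_inverse_right_invertible_iff:
  assumes "Mat2 a b c d * Mat2 a' b' c' d' = 1" "Mat2 a' b' c' d' * Mat2 a b c d = 1"
  shows "(\<exists>y. a * y = 1) \<longleftrightarrow> (\<exists>y. d' * y = 1)"
  using mat2_inverse_corner_right_invertible[OF assms]
    mat2_inverse_corner_right_invertible[OF mat2_inverse_swap[OF assms]] by blast

lemma mat2_inverse_left_invertible_iff:
  assumes "Mat2 a b c d * Mat2 a' b' c' d' = 1" "Mat2 a' b' c' d' * Mat2 a b c d = 1"
  shows "(\<exists>y. y * a = 1) \<longleftrightarrow> (\<exists>y. y * d' = 1)"
  using mat2_inverse_corner_left_invertible[OF assms]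
    mat2_inverse_corner_left_invertible[OF mat2_inverse_swap[OF assms]] by blast

text \<open>\<open>e_shift_rev s (n+2)\<close> is \<open>e^(n)(s n, \<dots>, s 1)\<close>, the continuant of the reversed sequence.\<close>
fun e_shift_rev :: "(nat \<Rightarrow> 'a::ring_1) \<Rightarrow> nat \<Rightarrow> 'a" where
  "e_shift_rev s 0 = -1"
| "e_shift_rev s (Suc 0) = 0"
| "e_shift_rev s (Suc (Suc n)) = s n * e_shift_rev s (Suc n) - e_shift_rev s n"

text \<open>With \<open>M t = [[t, 1], [-1, 0]]\<close> and \<open>D = diag(1, -1)\<close>, \<open>continuant_mat s k\<close> is
  \<open>D M(s 1) \<cdots> M(s k)\<close> and \<open>continuant_mat_inv s k\<close> is \<open>M(s k)\<^sup>-\<^sup>1 \<cdots> M(s 1)\<^sup>-\<^sup>1 D\<close>.\<close>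
definition continuant_mat :: "(nat \<Rightarrow> 'a::ring_1) \<Rightarrow> nat \<Rightarrow> 'a mat2" where
  "continuant_mat s k =
     Mat2 (e_shift s (k+2)) (e_shift s (k+1)) (e_shift (s \<circ> Suc) (k+1)) (e_shift (s \<circ> Suc) k)"

definition continuant_mat_inv :: "(nat \<Rightarrow> 'a::ring_1) \<Rightarrow> nat \<Rightarrow> 'a mat2" where
  "continuant_mat_inv s k =
     Mat2 (- e_shift_rev (s \<circ> Suc) k) (e_shift_rev s (k+1))
       (e_shift_rev (s \<circ> Suc) (k+1)) (- e_shift_rev s (k+2))"

lemma continuant_mat_Suc:
  "continuant_mat s (Suc k) = continuant_mat s k * Mat2 (s (Suc k)) 1 (-1) 0"
  by (simp add: continuant_mat_def algebra_simps)

lemma continuant_mat_inv_Suc: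
  "continuant_mat_inv s (Suc k) = Mat2 0 (-1) 1 (s (Suc k)) * continuant_mat_inv s k"
  by (simp add: continuant_mat_inv_def algebra_simps)

lemma continuant_mat_inverse:
  "continuant_mat s k * continuant_mat_inv s k = 1 \<and> continuant_mat_inv s k * continuant_mat s k = 1"
proof (induction k)
  case 0
  show ?case by (simp add: continuant_mat_def continuant_mat_inv_def one_mat2_def numeral_2_eq_2)
next
  case (Suc k)
  have M: "Mat2 x 1 (-1) 0 * Mat2 0 (-1) 1 x = 1" "Mat2 0 (-1) 1 x * Mat2 x 1 (-1) 0 = 1"
    for x :: 'a by (simp_all add: one_mat2_def)
  have "P * M * (M' * Q) = P * (M * M') * Q" "M' * Q * (P * M) = M' * (Q * P) * M"
    for P Q M M' :: "'a mat2" by (simp_all only: mult.assoc)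
  then show ?case
    unfolding continuant_mat_Suc continuant_mat_inv_Suc using M Suc.IH by simp
qed

lemma e_shift_right_invertible_iff:
  "(\<exists>y. e_shift s (k+2) * y = 1) \<longleftrightarrow> (\<exists>y. e_shift_rev s (k+2) * y = 1)"
proof -
  have "(\<exists>y. e_shift s (k+2) * y = 1) \<longleftrightarrow> (\<exists>y. - e_shift_rev s (k+2) * y = 1)"
    using continuant_mat_inverse[of s k] unfolding continuant_mat_def continuant_mat_inv_def
    by (metis mat2_inverse_right_invertible_iff)
  then show ?thesis by (simp only: right_invertible_uminus_iff)
qed

lemma e_shift_left_invertible_iff:
  "(\<exists>y. y * e_shift s (k+2) = 1) \<longleftrightarrow> (\<exists>y. y * e_shift_rev s (k+2) = 1)"
proof -
  have "(\<exists>y. y * e_shift s (k+2) = 1) \<longleftrightarrow> (\<exists>y. y * - e_shift_rev s (k+2) = 1)"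
    using continuant_mat_inverse[of s k] unfolding continuant_mat_def continuant_mat_inv_def
    by (metis mat2_inverse_left_invertible_iff)
  then show ?thesis by (simp only: left_invertible_uminus_iff)
qed

lemma ring_unit_e_shift_iff: "ring_unit (e_shift s (k+2)) \<longleftrightarrow> ring_unit (e_shift_rev s (k+2))"
  by (simp only: ring_unit_iff_left_right_invertible
      e_shift_left_invertible_iff e_shift_right_invertible_iff)

lemma e_shift_mult_rev_commute:
  "e_shift s (Suc m) * e_shift_rev s m = e_shift s m * e_shift_rev s (Suc m)"
  by (induction s m rule: e_shift.induct) (simp_all add: algebra_simps)

lemma jordan_hom_add: "jordan_hom \<alpha> \<Longrightarrow> \<alpha> (x + y) = \<alpha> x + \<alpha> y"
  by (simp add: jordan_hom_def)

lemma jordan_hom_one: "jordan_hom \<alpha> \<Longrightarrow> \<alpha> 1 = 1"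
  by (simp add: jordan_hom_def)

lemma jordan_hom_sandwich: "jordan_hom \<alpha> \<Longrightarrow> \<alpha> (x * y * x) = \<alpha> x * \<alpha> y * \<alpha> x"
  by (simp add: jordan_hom_def)

lemma jordan_hom_zero: "jordan_hom \<alpha> \<Longrightarrow> \<alpha> 0 = 0"
  using jordan_hom_add[of \<alpha> 0 0] by simp

lemma jordan_hom_uminus: "jordan_hom \<alpha> \<Longrightarrow> \<alpha> (- x) = - \<alpha> x"
  using jordan_hom_add[of \<alpha> x "- x"] jordan_hom_zero[of \<alpha>]
  by (simp add: eq_neg_iff_add_eq_0 add.commute)

lemma jordan_hom_diff: "jordan_hom \<alpha> \<Longrightarrow> \<alpha> (x - y) = \<alpha> x - \<alpha> y"
  using jordan_hom_add[of \<alpha> x "- y"] jordan_hom_uminus[of \<alpha> y] by simp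

lemma jordan_hom_sandwich_linear:
  assumes "jordan_hom \<alpha>"
  shows "\<alpha> (x * y * z + z * y * x) = \<alpha> x * \<alpha> y * \<alpha> z + \<alpha> z * \<alpha> y * \<alpha> x"
proof -
  have "\<alpha> ((x + z) * y * (x + z)) = \<alpha> (x * y * x) + \<alpha> (x * y * z + z * y * x) + \<alpha> (z * y * z)"
    by (simp add: algebra_simps jordan_hom_add[OF assms])
  moreover have "(\<alpha> x + \<alpha> z) * \<alpha> y * (\<alpha> x + \<alpha> z) = \<alpha> x * \<alpha> y * \<alpha> x +
      (\<alpha> x * \<alpha> y * \<alpha> z + \<alpha> z * \<alpha> y * \<alpha> x) + \<alpha> z * \<alpha> y * \<alpha> z"
    by (simp add: algebra_simps)
  ultimately show ?thesis
    by (simp add: jordan_hom_sandwich[OF assms] jordan_hom_add[OF assms])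
qed

text \<open>The recurrences below express these through \<open>x c x\<close> and \<open>x t c + c t x\<close> only.\<close>
definition e_sandwich :: "(nat \<Rightarrow> 'a::ring_1) \<Rightarrow> nat \<Rightarrow> 'a \<Rightarrow> 'a" where
  "e_sandwich s m c = e_shift s m * c * e_shift_rev s m"

definition e_sandwich_mixed :: "(nat \<Rightarrow> 'a::ring_1) \<Rightarrow> nat \<Rightarrow> 'a \<Rightarrow> 'a \<Rightarrow> 'a" where
  "e_sandwich_mixed s m t c =
     e_shift s (Suc m) * (t * c) * e_shift_rev s m + e_shift s m * (c * t) * e_shift_rev s (Suc m)"

lemma e_sandwich_Suc_Suc:
  "e_sandwich s (Suc (Suc m)) c =
     e_sandwich s (Suc m) (s m * c * s m) - e_sandwich_mixed s m (s m) c + e_sandwich s m c"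
  unfolding e_sandwich_def e_sandwich_mixed_def by (simp add: algebra_simps)

lemma e_sandwich_mixed_Suc_Suc:
  "e_sandwich_mixed s (Suc (Suc m)) t c =
     e_sandwich s (Suc (Suc m)) (s (Suc m) * t * c + c * t * s (Suc m))
       - e_sandwich_mixed s (Suc m) c t"
  unfolding e_sandwich_def e_sandwich_mixed_def by (simp add: algebra_simps)

lemma jordan_hom_e_sandwich:
  assumes J: "jordan_hom \<alpha>"
  shows "(\<forall>c. \<alpha> (e_sandwich s m c) = e_sandwich (\<alpha> \<circ> s) m (\<alpha> c)) \<and>
    (\<forall>t c. \<alpha> (e_sandwich_mixed s m t c) = e_sandwich_mixed (\<alpha> \<circ> s) m (\<alpha> t) (\<alpha> c))"
proof (induction s m rule: e_shift.induct)
  case (1 s)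
  show ?case by (simp add: e_sandwich_def e_sandwich_mixed_def jordan_hom_zero[OF J])
next
  case (2 s)
  show ?case by (simp add: e_sandwich_def e_sandwich_mixed_def jordan_hom_zero[OF J])
next
  case (3 s m)
  have sandwich:
    "\<alpha> (e_sandwich s (Suc (Suc m)) c) = e_sandwich (\<alpha> \<circ> s) (Suc (Suc m)) (\<alpha> c)" for c
    using "3.IH" by (simp add: comp_def e_sandwich_Suc_Suc jordan_hom_add[OF J] jordan_hom_diff[OF J]
        jordan_hom_sandwich[OF J])
  have "\<alpha> (e_sandwich_mixed s (Suc (Suc m)) t c) =
      e_sandwich_mixed (\<alpha> \<circ> s) (Suc (Suc m)) (\<alpha> t) (\<alpha> c)" for t c
    using "3.IH" by (simp add: comp_def e_sandwich_mixed_Suc_Suc sandwich jordan_hom_diff[OF J]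
        jordan_hom_sandwich_linear[OF J])
  with sandwich show ?case by blast
qed

lemma jordan_hom_e_shift_mult_rev:
  assumes J: "jordan_hom \<alpha>"
  shows "\<alpha> (e_shift s (Suc m) * e_shift_rev s m) =
    e_shift (\<alpha> \<circ> s) (Suc m) * e_shift_rev (\<alpha> \<circ> s) m"
proof (induction m)
  case 0
  show ?case by (simp add: jordan_hom_zero[OF J])
next
  case (Suc m)
  have split: "e_shift s' (Suc (Suc m)) * e_shift_rev s' (Suc m) =
      e_sandwich s' (Suc m) (s' m) - e_shift s' (Suc m) * e_shift_rev s' m"
    for s' :: "nat \<Rightarrow> 'c::ring_1"
    using e_shift_mult_rev_commute[of s' m] by (simp add: e_sandwich_def algebra_simps)
  show ?case
    unfolding split using Suc.IH jordan_hom_e_sandwich[OF J, of s "Suc m"]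
    by (simp add: jordan_hom_diff[OF J] comp_def)
qed

lemma jordan_hom_ring_unit_e_shift:
  assumes J: "jordan_hom \<alpha>" and unit: "ring_unit (e_shift s (k+2))"
  shows "ring_unit (e_shift (\<alpha> \<circ> s) (k+2))"
proof -
  obtain y where y: "e_shift s (k+2) * y = 1"
    using unit unfolding ring_unit_def by blast
  obtain z where z: "z * e_shift_rev s (k+2) = 1"
    using unit unfolding ring_unit_e_shift_iff unfolding ring_unit_def by blast
  have "e_sandwich s (k+2) (y * z) = 1"
    unfolding e_sandwich_def using y z by (metis mult.assoc mult_1_left)
  then have "e_sandwich (\<alpha> \<circ> s) (k+2) (\<alpha> (y * z)) = 1"
    using jordan_hom_e_sandwich[OF J] jordan_hom_one[OF J] by metis
  then have "e_shift (\<alpha> \<circ> s) (k+2) * (\<alpha> (y * z) * e_shift_rev (\<alpha> \<circ> s) (k+2)) = 1"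
    and "(e_shift (\<alpha> \<circ> s) (k+2) * \<alpha> (y * z)) * e_shift_rev (\<alpha> \<circ> s) (k+2) = 1"
    unfolding e_sandwich_def by (simp_all add: mult.assoc)
  then have "\<exists>y. e_shift (\<alpha> \<circ> s) (k+2) * y = 1"
    and "\<exists>y. y * e_shift_rev (\<alpha> \<circ> s) (k+2) = 1"
    by blast+
  then show ?thesis
    unfolding ring_unit_iff_left_right_invertible e_shift_left_invertible_iff by blast
qed

lemma jordan_hom_e_shift_eq_0:
  assumes J: "jordan_hom \<alpha>" and unit: "ring_unit (e_shift s (n+2))"
    and zero: "e_shift s (n+1) = 0"
  shows "e_shift (\<alpha> \<circ> s) (n+1) = 0"
proof -
  consider "n = 0" | "n = 1" | k where "n = k + 2"
    by (metis One_nat_def add_2_eq_Suc' not0_implies_Suc)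
  then show ?thesis
  proof cases
    case 1
    then show ?thesis by simp
  next
    case 2
    \<comment> \<open>here \<open>1 = e_shift s 2 = 0\<close>, so both rings are trivial\<close>
    then have "\<alpha> 1 = \<alpha> 0" using zero by (simp add: numeral_2_eq_2)
    then have "(1 :: 'b) = 0" using jordan_hom_one[OF J] jordan_hom_zero[OF J] by simp
    then show ?thesis using mult_1_left[of "e_shift (\<alpha> \<circ> s) (n+1)"] by simp
  next
    case 3
    have "e_shift s (k+2) = - e_shift s (n+2)"
      using zero \<open>n = k + 2\<close> by (simp add: numeral_2_eq_2)
    then have "ring_unit (e_shift s (k+2))"
      using unit unfolding ring_unit_def by (metis minus_mult_minus)
    then obtain w where w: "e_shift_rev (\<alpha> \<circ> s) (k+2) * w = 1"
      using jordan_hom_ring_unit_e_shift[OF J] ring_unit_e_shift_iff ring_unit_def by metis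
    have "e_shift (\<alpha> \<circ> s) (n+1) * e_shift_rev (\<alpha> \<circ> s) (k+2) = 0"
      using jordan_hom_e_shift_mult_rev[OF J, of s "k+2"] zero jordan_hom_zero[OF J] \<open>n = k + 2\<close>
      by simp
    then have "e_shift (\<alpha> \<circ> s) (n+1) * e_shift_rev (\<alpha> \<circ> s) (k+2) * w = 0" by simp
    then show ?thesis using w by (simp add: mult.assoc)
  qed
qed

theorem theorem3p5:
  fixes \<alpha> :: "'a::ring_1 \<Rightarrow> 'b::ring_1" and T :: "'a list"
  assumes "jordan_hom \<alpha>"
  shows "(ring_unit (e_seq (int (length T)) T) \<longrightarrow>
            ring_unit (e_seq (int (length T)) (map \<alpha> T)))
       \<and> (ring_unit (e_seq (int (length T)) T) \<and> e_seq (int (length T) - 1) T = 0 \<longrightarrow>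
            e_seq (int (length T) - 1) (map \<alpha> T) = 0)"
proof -
  define s where "s i = (if 1 \<le> i \<and> i \<le> length T then T ! (i - 1) else 0)" for i
  have "(\<lambda>i. if 1 \<le> i \<and> i \<le> length T then map \<alpha> T ! (i - 1) else 0) = \<alpha> \<circ> s"
    using jordan_hom_zero[OF assms] by (auto simp: s_def fun_eq_iff)
  then have e_seq_T: "e_seq j T = e_shift s (nat (j + 2))"
    and e_seq_map: "e_seq j (map \<alpha> T) = e_shift (\<alpha> \<circ> s) (nat (j + 2))" for j
    unfolding e_seq_def s_def by simp_all
  have index: "nat (int (length T) + 2) = length T + 2" "nat (int (length T) - 1 + 2) = length T + 1"
    by simp_all
  show ?thesis
    unfolding e_seq_T e_seq_map index
    using jordan_hom_ring_unit_e_shift[OF assms] jordan_hom_e_shift_eq_0[OF assms]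
    by (intro conjI impI) auto
qed

end
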